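(* Let $P$ be a finite set of points in the plane, and let $T^*$ be a spanning tree of $P$ (with straight-line edges between points of $P$) that minimizes the Wiener index among all spanning trees of $P$. Then $T^*$ is planar, i.e., no two edges of $T^*$ cross each other.
   Context: For a spanning tree $T$ of $P$, each edge $(p,q)$ has weight equal to the Euclidean distance $|pq|$. For $p,q\in P$, $\delta_T(p,q)$ denotes the total weight of the unique path between $p$ and $q$ in $T$. The Wiener index of $T$ is $W(T)=\sum_{\{p,q\}\subseteq P}\delta_T(p,q)$, the sum over all pairs of points of $P$. *)

theory Defs
  imports "HOL-Analysis.Analysis"
begin

type_synonym point = "real ^ 2"

text \<open>A geometric graph on points of the plane: edges are 2-element sets of points.\<close>

definition is_path :: "point set set \<Rightarrow> point \<Rightarrow> point \<Rightarrow> point list \<Rightarrow> bool" where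
  "is_path T p q vs \<longleftrightarrow> vs \<noteq> [] \<and> hd vs = p \<and> last vs = q \<and> distinct vs \<and>
     (\<forall>i < length vs - 1. {vs ! i, vs ! Suc i} \<in> T)"

definition path_weight :: "point list \<Rightarrow> real" where
  "path_weight vs = (\<Sum>i < length vs - 1. dist (vs ! i) (vs ! Suc i))"

definition spanning_tree :: "point set \<Rightarrow> point set set \<Rightarrow> bool" where
  "spanning_tree P T \<longleftrightarrow>
     T \<subseteq> {{p, q} | p q. p \<in> P \<and> q \<in> P \<and> p \<noteq> q} \<and>
     (\<forall>p\<in>P. \<forall>q\<in>P. \<exists>!vs. is_path T p q vs)"

definition tree_dist :: "point set set \<Rightarrow> point \<Rightarrow> point \<Rightarrow> real" where
  "tree_dist T p q = path_weight (THE vs. is_path T p q vs)"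

text \<open>Wiener index: sum over unordered pairs {p,q}; computed as half the sum over ordered
  pairs (tree_dist is symmetric and vanishes on the diagonal).\<close>
definition wiener :: "point set \<Rightarrow> point set set \<Rightarrow> real" where
  "wiener P T = (\<Sum>p\<in>P. \<Sum>q\<in>P. tree_dist T p q) / 2"

definition edges_cross :: "point set \<Rightarrow> point set \<Rightarrow> bool" where
  "edges_cross e f \<longleftrightarrow> (\<exists>p q r s x. e = {p, q} \<and> f = {r, s} \<and>
     closed_segment p q \<inter> closed_segment r s = {x} \<and>
     x \<in> open_segment p q \<and> x \<in> open_segment r s)"

definition planar_tree :: "point set set \<Rightarrow> bool" where
  "planar_tree T \<longleftrightarrow> (\<forall>e\<in>T. \<forall>f\<in>T. \<not> edges_cross e f)"

end

theory Submission
  imports Defs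
begin

text \<open>Suppose the edges {a, b} and {c, d} of a Wiener-minimal spanning tree T cross. Deleting
  {a, b} splits T into the side A of a and the side B of b, and we may take c and d in B.
  Replacing {a, b} by {a, c} changes the Wiener index by |A| times the sum over w in B of
  |ac| - |ab| + d(c, w) - d(b, w), so by minimality this sum is nonnegative; likewise for replacing
  {d, c} by {d, b}, with b on the side of c. In the sum of the two sums, every w lying on neither
  of the two removed sides (b among them) contributes |ac| + |bd| - |ab| - |cd|, which is negative
  because {a, b} and {c, d} are the crossing diagonals of the quadrilateral a c b d, and every
  other w contributes at most 0 by the triangle inequality: a contradiction.\<close>

definition walk :: "'a set set \<Rightarrow> 'a list \<Rightarrow> bool" where
  "walk E vs \<longleftrightarrow> (\<forall>i < length vs - 1. {vs ! i, vs ! Suc i} \<in> E)"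

lemma is_path_iff_walk:
  "is_path T p q vs \<longleftrightarrow> vs \<noteq> [] \<and> hd vs = p \<and> last vs = q \<and> distinct vs \<and> walk T vs"
  by (simp add: is_path_def walk_def)

lemma walk_Nil [simp]: "walk E []"
  and walk_singleton [simp]: "walk E [x]"
  by (auto simp: walk_def)

lemma walk_Cons_Cons [simp]: "walk E (x # y # zs) \<longleftrightarrow> {x, y} \<in> E \<and> walk E (y # zs)"
  by (simp add: walk_def All_less_Suc2)

lemma walk_Cons: "vs \<noteq> [] \<Longrightarrow> walk E (x # vs) \<longleftrightarrow> {x, hd vs} \<in> E \<and> walk E vs"
  by (cases vs) auto

lemma walk_append:
  assumes "xs \<noteq> []" "ys \<noteq> []"
  shows "walk E (xs @ ys) \<longleftrightarrow> walk E xs \<and> walk E ys \<and> {last xs, hd ys} \<in> E"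
  using assms
proof (induction xs rule: induct_list012)
  case (2 x)
  then show ?case by (cases ys) auto
qed auto

lemma walk_mono: "walk E vs \<Longrightarrow> E \<subseteq> F \<Longrightarrow> walk F vs"
  by (auto simp: walk_def)

lemma is_path_mono: "is_path E u v vs \<Longrightarrow> E \<subseteq> F \<Longrightarrow> is_path F u v vs"
  by (auto simp: is_path_iff_walk intro: walk_mono)

lemma walk_rev: "walk E vs \<Longrightarrow> walk E (rev vs)"
proof (induction vs rule: induct_list012)
  case (3 x y zs)
  then show ?case using walk_append[of "rev zs @ [y]" "[x]"] by (simp add: insert_commute)
qed auto

lemma walk_drop: "walk E vs \<Longrightarrow> walk E (drop k vs)"
  by (auto simp: walk_def)

lemma walk_const:
  assumes "walk E vs" "\<And>x y. {x, y} \<in> E \<Longrightarrow> S x = S y" "z \<in> set vs"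
  shows "S z = S (hd vs)"
  using assms by (induction vs rule: induct_list012) auto

lemma walk_nth_edges_distinct:
  assumes "distinct vs" "i < length vs - 1" "j < length vs - 1" "i \<noteq> j"
  shows "{vs ! i, vs ! Suc i} \<noteq> {vs ! j, vs ! Suc j}"
  using assms by (auto simp: doubleton_eq_iff nth_eq_iff_index_eq)

lemma walk_take_drop_delete_edge:
  assumes "distinct vs" "walk E vs" "i < length vs - 1"
  shows "walk (E - {{vs ! i, vs ! Suc i}}) (take (Suc i) vs)"
    and "walk (E - {{vs ! i, vs ! Suc i}}) (drop (Suc i) vs)"
proof -
  have other: "{vs ! j, vs ! Suc j} \<in> E - {{vs ! i, vs ! Suc i}}" if "j < length vs - 1" "j \<noteq> i" for j
    using assms that walk_nth_edges_distinct[OF assms(1) that(1) assms(3) that(2)]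
    by (auto simp: walk_def)
  show "walk (E - {{vs ! i, vs ! Suc i}}) (take (Suc i) vs)"
    unfolding walk_def using other by auto
  show "walk (E - {{vs ! i, vs ! Suc i}}) (drop (Suc i) vs)"
    unfolding walk_def using other[of "Suc i + _"] by auto
qed

lemma path_split_at_edge:
  assumes path: "is_path (insert e E) u v vs" and "\<not> walk E vs"
  obtains xs ys where "vs = xs @ ys" "is_path E u (last xs) xs" "is_path E (hd ys) v ys"
    "{last xs, hd ys} = e"
proof -
  have w: "walk (insert e E) vs" and d: "distinct vs" and hl: "vs \<noteq> []" "hd vs = u" "last vs = v"
    using path by (auto simp: is_path_iff_walk)
  obtain i where i: "i < length vs - 1" "{vs ! i, vs ! Suc i} \<notin> E"
    using \<open>\<not> walk E vs\<close> by (auto simp: walk_def)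
  have e: "{vs ! i, vs ! Suc i} = e"
    using i w by (auto simp: walk_def)
  have sub: "insert e E - {e} \<subseteq> E" by blast
  let ?xs = "take (Suc i) vs" and ?ys = "drop (Suc i) vs"
  have "walk E ?xs" "walk E ?ys"
    using walk_take_drop_delete_edge[OF d w i(1)] e walk_mono[OF _ sub] by auto
  moreover have "last ?xs = vs ! i" "hd ?ys = vs ! Suc i"
    using i(1) by (auto simp: take_Suc_conv_app_nth hd_drop_conv_nth)
  moreover have "?xs \<noteq> []" "?ys \<noteq> []" "hd ?xs = u" "last ?ys = v"
    using i(1) hl by auto
  ultimately show thesis
    using that[of ?xs ?ys] d e by (auto simp: is_path_iff_walk)
qed

lemma path_weight_Nil [simp]: "path_weight [] = 0"
  and path_weight_singleton [simp]: "path_weight [x] = 0"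
  by (auto simp: path_weight_def)

lemma path_weight_Cons_Cons [simp]: "path_weight (x # y # zs) = dist x y + path_weight (y # zs)"
proof -
  have "path_weight (x # y # zs) = (\<Sum>i < Suc (length zs). dist ((x # y # zs) ! i) ((x # y # zs) ! Suc i))"
    by (simp add: path_weight_def)
  also have "\<dots> = dist x y + (\<Sum>i < length zs. dist ((y # zs) ! i) ((y # zs) ! Suc i))"
    by (subst sum.lessThan_Suc_shift) simp
  finally show ?thesis by (simp add: path_weight_def)
qed

lemma path_weight_append:
  assumes "xs \<noteq> []" "ys \<noteq> []"
  shows "path_weight (xs @ ys) = path_weight xs + dist (last xs) (hd ys) + path_weight ys"
  using assms
proof (induction xs rule: induct_list012)
  case (2 x)
  then show ?case by (cases ys) auto
qed auto

lemma path_weight_rev: "path_weight (rev vs) = path_weight vs"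
proof (induction vs rule: induct_list012)
  case (3 x y zs)
  then show ?case
    using path_weight_append[of "rev zs @ [y]" "[x]"] by (simp add: dist_commute)
qed auto

lemma dist_le_path_weight: "vs \<noteq> [] \<Longrightarrow> dist (hd vs) (last vs) \<le> path_weight vs"
proof (induction vs rule: induct_list012)
  case (3 x y zs)
  then show ?case using dist_triangle[of x "last (y # zs)" y] by simp
qed auto

definition tree_cut :: "'a set set \<Rightarrow> ('a \<Rightarrow> bool) \<Rightarrow> 'a \<Rightarrow> 'a \<Rightarrow> bool" where
  "tree_cut T S a b \<longleftrightarrow> {a, b} \<in> T \<and> S a \<and> \<not> S b \<and> (\<forall>x y. {x, y} \<in> T - {{a, b}} \<longrightarrow> S x = S y)"

lemma tree_cut_flip: "tree_cut T S a b \<Longrightarrow> tree_cut T (\<lambda>z. \<not> S z) b a"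
  by (auto simp: tree_cut_def insert_commute)

lemma tree_cut_walk_const:
  "tree_cut T S a b \<Longrightarrow> walk (T - {{a, b}}) vs \<Longrightarrow> z \<in> set vs \<Longrightarrow> S z = S (hd vs)"
  by (rule walk_const) (auto simp: tree_cut_def)

lemma tree_cut_path_const:
  assumes "tree_cut T S a b" "is_path (T - {{a, b}}) u v vs" "z \<in> set vs"
  shows "S z = S u"
  using tree_cut_walk_const[OF assms(1) _ assms(3)] assms(2) by (simp add: is_path_iff_walk)

lemma tree_cut_same_side_walk:
  assumes cut: "tree_cut T S a b" and path: "is_path T u v vs" and same: "S u = S v"
  shows "walk (T - {{a, b}}) vs"
proof (rule ccontr)
  have "is_path (insert {a, b} (T - {{a, b}})) u v vs"
    using path cut by (simp add: tree_cut_def insert_absorb)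
  moreover assume "\<not> walk (T - {{a, b}}) vs"
  ultimately obtain xs ys where "vs = xs @ ys" and xs: "is_path (T - {{a, b}}) u (last xs) xs"
    and ys: "is_path (T - {{a, b}}) (hd ys) v ys" and e: "{last xs, hd ys} = {a, b}"
    by (rule path_split_at_edge)
  have "S (last xs) = S u"
    using tree_cut_path_const[OF cut xs, of "last xs"] xs by (simp add: is_path_iff_walk)
  moreover have "S v = S (hd ys)"
    using tree_cut_path_const[OF cut ys, of v] ys by (auto simp: is_path_iff_walk)
  moreover have "S (last xs) \<noteq> S (hd ys)"
    using e cut by (auto simp: tree_cut_def doubleton_eq_iff)
  ultimately show False using same by simp
qed

definition tree_path :: "point set set \<Rightarrow> point \<Rightarrow> point \<Rightarrow> point list" where
  "tree_path T u v = (THE vs. is_path T u v vs)"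

lemma tree_dist_eq_path_weight: "tree_dist T u v = path_weight (tree_path T u v)"
  by (simp add: tree_dist_def tree_path_def)

locale plane_spanning_tree =
  fixes P :: "point set" and T :: "point set set"
  assumes tree: "spanning_tree P T"
begin

lemma spanning_tree_edge: "{x, y} \<in> T \<Longrightarrow> x \<in> P \<and> y \<in> P \<and> x \<noteq> y"
  using tree unfolding spanning_tree_def by (auto simp: doubleton_eq_iff)

lemma ex1_is_path: "u \<in> P \<Longrightarrow> v \<in> P \<Longrightarrow> \<exists>!vs. is_path T u v vs"
  using tree unfolding spanning_tree_def by blast

lemma is_path_tree_path: "u \<in> P \<Longrightarrow> v \<in> P \<Longrightarrow> is_path T u v (tree_path T u v)"
  unfolding tree_path_def by (rule theI') (rule ex1_is_path)

lemma tree_path_unique: "u \<in> P \<Longrightarrow> v \<in> P \<Longrightarrow> is_path T u v vs \<Longrightarrow> tree_path T u v = vs"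
  unfolding tree_path_def by (rule the1_equality) (rule ex1_is_path)

lemma tree_path_ends:
  assumes "u \<in> P" "v \<in> P"
  shows "tree_path T u v \<noteq> []" "hd (tree_path T u v) = u" "last (tree_path T u v) = v"
  using is_path_tree_path[OF assms] by (auto simp: is_path_iff_walk)

lemma tree_path_refl: "u \<in> P \<Longrightarrow> tree_path T u u = [u]"
  by (rule tree_path_unique) (auto simp: is_path_iff_walk)

lemma tree_path_edge: "{u, v} \<in> T \<Longrightarrow> tree_path T u v = [u, v]"
  using spanning_tree_edge[of u v] tree_path_unique[of u v "[u, v]"] by (simp add: is_path_iff_walk)

lemma tree_path_commute:
  assumes "u \<in> P" "v \<in> P"
  shows "tree_path T v u = rev (tree_path T u v)"
proof (rule tree_path_unique)
  show "is_path T v u (rev (tree_path T u v))"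
    using is_path_tree_path[OF assms] by (auto simp: is_path_iff_walk hd_rev last_rev walk_rev)
qed (use assms in auto)

lemma tree_dist_commute: "u \<in> P \<Longrightarrow> v \<in> P \<Longrightarrow> tree_dist T u v = tree_dist T v u"
  using tree_path_commute[of u v] by (simp add: tree_dist_eq_path_weight path_weight_rev)

lemma tree_dist_refl: "u \<in> P \<Longrightarrow> tree_dist T u u = 0"
  by (simp add: tree_dist_eq_path_weight tree_path_refl)

lemma dist_le_tree_dist: "u \<in> P \<Longrightarrow> v \<in> P \<Longrightarrow> dist u v \<le> tree_dist T u v"
  using dist_le_path_weight[of "tree_path T u v"] tree_path_ends[of u v]
  by (simp add: tree_dist_eq_path_weight)

lemma set_tree_path:
  assumes "u \<in> P" "v \<in> P"
  shows "set (tree_path T u v) \<subseteq> P"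
proof
  fix z assume z: "z \<in> set (tree_path T u v)"
  have "walk T (tree_path T u v)" using is_path_tree_path[OF assms] by (simp add: is_path_iff_walk)
  then have "(z \<in> P) = (hd (tree_path T u v) \<in> P)"
    using z spanning_tree_edge by (intro walk_const[where S = "\<lambda>z. z \<in> P"]) blast+
  then show "z \<in> P" using tree_path_ends[OF assms] assms by simp
qed

lemma tree_path_drop:
  assumes "u \<in> P" "v \<in> P" "k < length (tree_path T u v)"
  shows "tree_path T (tree_path T u v ! k) v = drop k (tree_path T u v)"
proof (rule tree_path_unique)
  show "tree_path T u v ! k \<in> P" using assms set_tree_path nth_mem by blast
  show "is_path T (tree_path T u v ! k) v (drop k (tree_path T u v))"
    using is_path_tree_path[OF assms(1,2)] assms(3)
    by (auto simp: is_path_iff_walk hd_drop_conv_nth walk_drop)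
qed (use assms in auto)

lemma tree_path_Cons:
  assumes "{x, y} \<in> T" "a \<in> P" "x \<notin> set (tree_path T y a)"
  shows "tree_path T x a = x # tree_path T y a"
proof (rule tree_path_unique)
  show "x \<in> P" "a \<in> P" using assms spanning_tree_edge by auto
  show "is_path T x a (x # tree_path T y a)"
    using assms is_path_tree_path[of y a] tree_path_ends[of y a] spanning_tree_edge[of x y]
    by (cases "tree_path T y a") (auto simp: is_path_iff_walk)
qed

lemma tree_path_step:
  assumes e: "{x, y} \<in> T" and a: "a \<in> P"
  shows "tree_path T x a = x # tree_path T y a \<or> tree_path T y a = y # tree_path T x a"
proof (cases "y \<in> set (tree_path T x a)")
  case False
  then show ?thesis using tree_path_Cons[of y x a] e a by (simp add: insert_commute)
next
  case True
  let ?xs = "tree_path T x a"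
  have xy: "x \<in> P" "y \<in> P" "x \<noteq> y" using spanning_tree_edge[OF e] by auto
  obtain k where k: "k < length ?xs" "?xs ! k = y" using True by (metis in_set_conv_nth)
  have "?xs ! 0 = x" using tree_path_ends[OF xy(1) a] by (cases ?xs) auto
  with k xy have "0 < k" by (cases k) auto
  have "x \<in> set (take k ?xs)"
    using \<open>?xs ! 0 = x\<close> \<open>0 < k\<close> k(1) by (auto simp: in_set_conv_nth)
  moreover have "distinct (take k ?xs @ drop k ?xs)"
    using is_path_tree_path[OF xy(1) a] by (simp add: is_path_iff_walk)
  ultimately have "x \<notin> set (drop k ?xs)"
    by (auto simp del: append_take_drop_id)
  moreover have "tree_path T y a = drop k ?xs"
    using tree_path_drop[OF xy(1) a k(1)] k(2) by simp
  ultimately have "x \<notin> set (tree_path T y a)" by simp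
  then show ?thesis using tree_path_Cons[OF e a] by blast
qed

lemma tree_cut_exists:
  assumes e: "{a, b} \<in> T"
  shows "tree_cut T (\<lambda>v. walk (T - {{a, b}}) (tree_path T v a)) a b"
proof -
  let ?E = "T - {{a, b}}"
  have ab: "a \<in> P" "b \<in> P" "a \<noteq> b" using spanning_tree_edge[OF e] by auto
  have step: "walk ?E (tree_path T x a) = walk ?E (tree_path T y a)" if xy: "{x, y} \<in> ?E" for x y
  proof -
    have "x \<in> P" "y \<in> P" using xy spanning_tree_edge by auto
    then have "tree_path T x a \<noteq> []" "hd (tree_path T x a) = x"
      "tree_path T y a \<noteq> []" "hd (tree_path T y a) = y"
      using tree_path_ends[OF _ ab(1)] by auto
    then show ?thesis
      using tree_path_step[OF _ ab(1), of x y] xy by (auto simp: walk_Cons insert_commute)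
  qed
  show ?thesis
    unfolding tree_cut_def
    using e step ab tree_path_refl[OF ab(1)] tree_path_edge[of b a]
    by (auto simp: insert_commute)
qed

lemma tree_cut_avoiding:
  assumes "e \<in> T"
  obtains S a b where "e = {a, b}" "tree_cut T S a b" "\<not> S w"
proof -
  obtain a b where e: "e = {a, b}" using assms tree unfolding spanning_tree_def by blast
  then have cut: "tree_cut T (\<lambda>v. walk (T - {{a, b}}) (tree_path T v a)) a b" (is "tree_cut T ?S a b")
    using tree_cut_exists assms by blast
  show thesis
  proof (cases "?S w")
    case True
    then show ?thesis
      using that[of b a "\<lambda>z. \<not> ?S z"] tree_cut_flip[OF cut] e by (simp add: insert_commute)
  next
    case False
    then show ?thesis using that cut e by blast
  qed
qed

end

text \<open>For a cut S of T at the edge {a, b}, the path from u to v in the tree obtained from T by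
  replacing {a, b} with an edge {x, y} from S to its complement.\<close>
definition exchange_path ::
    "point set set \<Rightarrow> (point \<Rightarrow> bool) \<Rightarrow> point \<Rightarrow> point \<Rightarrow> point \<Rightarrow> point \<Rightarrow> point list" where
  "exchange_path T S x y u v =
     (if S u = S v then tree_path T u v
      else if S u then tree_path T u x @ tree_path T y v
      else tree_path T u y @ tree_path T x v)"

context plane_spanning_tree
begin

lemma exchange_path_same_side:
  assumes cut: "tree_cut T S a b" and uv: "u \<in> P" "v \<in> P" "S u = S v"
  shows "is_path (insert {x, y} (T - {{a, b}})) u v (tree_path T u v)"
proof -
  have "is_path T u v (tree_path T u v)" using is_path_tree_path[OF uv(1,2)] .
  moreover have "walk (T - {{a, b}}) (tree_path T u v)"
    using tree_cut_same_side_walk[OF cut calculation uv(3)] .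
  ultimately show ?thesis by (auto simp: is_path_iff_walk intro: walk_mono)
qed

lemma exchange_path_across:
  assumes cut: "tree_cut T S a b"
    and xy: "x \<in> P" "y \<in> P" "S x" "\<not> S y" and uv: "u \<in> P" "v \<in> P" "S u" "\<not> S v"
  shows "is_path (insert {x, y} (T - {{a, b}})) u v (tree_path T u x @ tree_path T y v)"
proof -
  let ?E = "T - {{a, b}}"
  have p1: "is_path T u x (tree_path T u x)" and p2: "is_path T y v (tree_path T y v)"
    using is_path_tree_path xy uv by auto
  have w1: "walk ?E (tree_path T u x)" and w2: "walk ?E (tree_path T y v)"
    using tree_cut_same_side_walk[OF cut] p1 p2 xy uv by auto
  have "S z" if "z \<in> set (tree_path T u x)" for z
    using tree_cut_walk_const[OF cut w1 that] p1 uv by (simp add: is_path_iff_walk)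
  moreover have "\<not> S z" if "z \<in> set (tree_path T y v)" for z
    using tree_cut_walk_const[OF cut w2 that] p2 xy by (simp add: is_path_iff_walk)
  ultimately have "set (tree_path T u x) \<inter> set (tree_path T y v) = {}" by blast
  then show ?thesis
    using p1 p2 w1 w2 by (auto simp: is_path_iff_walk walk_append intro: walk_mono)
qed

lemma is_path_exchange_path:
  assumes cut: "tree_cut T S a b"
    and xy: "x \<in> P" "y \<in> P" "S x" "\<not> S y" and uv: "u \<in> P" "v \<in> P"
  shows "is_path (insert {x, y} (T - {{a, b}})) u v (exchange_path T S x y u v)"
proof -
  have "is_path (insert {y, x} (T - {{b, a}})) u v (tree_path T u y @ tree_path T x v)"
    if "\<not> S u" "S v"
    using exchange_path_across[OF tree_cut_flip[OF cut]] xy uv that by simp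
  then show ?thesis
    using exchange_path_same_side[OF cut uv] exchange_path_across[OF cut xy uv]
    by (auto simp: exchange_path_def insert_commute)
qed

lemma exchange_path_unique:
  assumes cut: "tree_cut T S a b"
    and xy: "x \<in> P" "y \<in> P" "S x" "\<not> S y" and uv: "u \<in> P" "v \<in> P"
    and path: "is_path (insert {x, y} (T - {{a, b}})) u v vs"
  shows "vs = exchange_path T S x y u v"
proof (cases "walk (T - {{a, b}}) vs")
  case True
  then have path_E: "is_path (T - {{a, b}}) u v vs" using path by (simp add: is_path_iff_walk)
  then have "vs = tree_path T u v"
    using tree_path_unique[OF uv] is_path_mono[OF path_E] by auto
  moreover have "S v = S u"
    using tree_cut_path_const[OF cut path_E, of v] path_E by (auto simp: is_path_iff_walk)
  ultimately show ?thesis by (simp add: exchange_path_def)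
next
  case False
  obtain xs ys where vs: "vs = xs @ ys" and xs: "is_path (T - {{a, b}}) u (last xs) xs"
    and ys: "is_path (T - {{a, b}}) (hd ys) v ys" and e: "{last xs, hd ys} = {x, y}"
    using path_split_at_edge[OF path False] .
  have ends: "last xs \<in> P" "hd ys \<in> P"
    using e xy by (auto simp: doubleton_eq_iff)
  have "S (last xs) = S u"
    using tree_cut_path_const[OF cut xs, of "last xs"] xs by (simp add: is_path_iff_walk)
  moreover have "S v = S (hd ys)"
    using tree_cut_path_const[OF cut ys, of v] ys by (auto simp: is_path_iff_walk)
  moreover have "xs = tree_path T u (last xs)"
    using tree_path_unique[OF uv(1) ends(1) is_path_mono[OF xs]] by auto
  moreover have "ys = tree_path T (hd ys) v"
    using tree_path_unique[OF ends(2) uv(2) is_path_mono[OF ys]] by auto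
  ultimately show ?thesis
    using vs e xy by (auto simp: exchange_path_def doubleton_eq_iff)
qed

lemma spanning_tree_exchange:
  assumes cut: "tree_cut T S a b" and xy: "x \<in> P" "y \<in> P" "S x" "\<not> S y"
  shows "spanning_tree P (insert {x, y} (T - {{a, b}}))"
proof -
  have "x \<noteq> y" using xy by auto
  moreover have "\<exists>!vs. is_path (insert {x, y} (T - {{a, b}})) u v vs" if "u \<in> P" "v \<in> P" for u v
    using is_path_exchange_path[OF cut xy that] exchange_path_unique[OF cut xy that] by blast
  ultimately show ?thesis
    using tree xy unfolding spanning_tree_def by auto
qed

lemma tree_dist_exchange:
  assumes cut: "tree_cut T S a b"
    and xy: "x \<in> P" "y \<in> P" "S x" "\<not> S y" and uv: "u \<in> P" "v \<in> P"
  shows "tree_dist (insert {x, y} (T - {{a, b}})) u v =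
    (if S u = S v then tree_dist T u v
     else if S u then tree_dist T u x + dist x y + tree_dist T y v
     else tree_dist T u y + dist y x + tree_dist T x v)"
proof -
  have "tree_path (insert {x, y} (T - {{a, b}})) u v = exchange_path T S x y u v"
    unfolding tree_path_def
    using is_path_exchange_path[OF cut xy uv] exchange_path_unique[OF cut xy uv] by (rule the_equality)
  moreover have "path_weight (tree_path T p q @ tree_path T r s) =
      tree_dist T p q + dist q r + tree_dist T r s" if "p \<in> P" "q \<in> P" "r \<in> P" "s \<in> P" for p q r s
    using path_weight_append tree_path_ends that by (simp add: tree_dist_eq_path_weight)
  ultimately show ?thesis
    using xy uv by (simp add: tree_dist_eq_path_weight exchange_path_def)
qed

lemma tree_dist_across_cut:
  assumes cut: "tree_cut T S a b" and "u \<in> P" "w \<in> P" "S u" "\<not> S w"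
  shows "tree_dist T u w = tree_dist T u a + dist a b + tree_dist T b w"
proof -
  have ab: "{a, b} \<in> T" "S a" "\<not> S b" using cut by (auto simp: tree_cut_def)
  then have "insert {a, b} (T - {{a, b}}) = T" by auto
  then show ?thesis
    using tree_dist_exchange[OF cut _ _ ab(2,3) assms(2,3)] spanning_tree_edge[OF ab(1)] assms(4,5)
    by simp
qed

end

text \<open>For a cut S of T at the edge {a, b} and c outside S: the increase of the tree distance from
  any point of S to w outside S caused by replacing the edge {a, b} with {a, c}.\<close>
definition exchange_delta :: "point set set \<Rightarrow> point \<Rightarrow> point \<Rightarrow> point \<Rightarrow> point \<Rightarrow> real" where
  "exchange_delta T a b c w = dist a c - dist a b + tree_dist T c w - tree_dist T b w"

lemma double_sum_across:
  fixes g :: "'a \<Rightarrow> real"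
  assumes "finite A"
  shows "(\<Sum>u\<in>A. \<Sum>v\<in>A. (if S u \<and> \<not> S v then g v else 0) + (if \<not> S u \<and> S v then g u else 0)) =
    2 * card {u \<in> A. S u} * (\<Sum>v\<in>A. if S v then 0 else g v)"
proof -
  let ?G = "\<Sum>v\<in>A. if S v then 0 else g v"
  have count: "(\<Sum>u\<in>A. if S u then c else 0) = card {u \<in> A. S u} * c" for c :: real
    using sum.inter_filter[OF assms, of "\<lambda>_. c" S] by simp
  have "(\<Sum>u\<in>A. \<Sum>v\<in>A. if S u \<and> \<not> S v then g v else 0) = (\<Sum>u\<in>A. if S u then ?G else 0)"
    by (intro sum.cong) (auto intro: sum.cong)
  moreover have "(\<Sum>u\<in>A. \<Sum>v\<in>A. if \<not> S u \<and> S v then g u else 0) =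
      (\<Sum>u\<in>A. card {v \<in> A. S v} * (if S u then 0 else g u))"
    using count by (intro sum.cong) auto
  ultimately show ?thesis
    by (simp add: sum.distrib count sum_distrib_left[symmetric])
qed

context plane_spanning_tree
begin

lemma tree_dist_exchange_diff:
  assumes cut: "tree_cut T S a b" and c: "c \<in> P" "\<not> S c" and uv: "u \<in> P" "v \<in> P"
  shows "tree_dist (insert {a, c} (T - {{a, b}})) u v - tree_dist T u v =
    (if S u \<and> \<not> S v then exchange_delta T a b c v else 0) +
    (if \<not> S u \<and> S v then exchange_delta T a b c u else 0)"
proof -
  have ab: "a \<in> P" "b \<in> P" "S a" "\<not> S b"
    using cut spanning_tree_edge by (auto simp: tree_cut_def)
  note new = tree_dist_exchange[OF cut ab(1) c(1) ab(3) c(2) uv]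
  consider "S u = S v" | "S u" "\<not> S v" | "\<not> S u" "S v" by blast
  then show ?thesis
  proof cases
    case 1
    then show ?thesis using new by auto
  next
    case 2
    then show ?thesis
      using new tree_dist_across_cut[OF cut uv] by (simp add: exchange_delta_def)
  next
    case 3
    then show ?thesis
      using new tree_dist_across_cut[OF tree_cut_flip[OF cut] uv]
        tree_dist_commute[OF uv(1) c(1)] tree_dist_commute[OF uv(1) ab(2)]
      by (simp add: exchange_delta_def dist_commute)
  qed
qed

lemma exchange_delta_nonpos:
  assumes cut: "tree_cut T S d c" and "v \<in> P" "S v" "a \<in> P" "b \<in> P" "\<not> S b"
  shows "exchange_delta T a b c v \<le> 0"
proof -
  have c: "c \<in> P" "\<not> S c" using cut spanning_tree_edge by (auto simp: tree_cut_def)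
  have "tree_dist T v b = tree_dist T v d + dist d c + tree_dist T c b"
    using tree_dist_across_cut[OF cut] assms by simp
  moreover have "tree_dist T v c = tree_dist T v d + dist d c"
    using tree_dist_across_cut[OF cut] tree_dist_refl c assms by simp
  moreover have "dist c b \<le> tree_dist T c b" using dist_le_tree_dist c assms by simp
  moreover have "dist a c \<le> dist a b + dist b c" by (rule dist_triangle)
  ultimately show ?thesis
    using tree_dist_commute assms c by (simp add: exchange_delta_def dist_commute)
qed

lemma wiener_exchange:
  assumes "finite P" and cut: "tree_cut T S a b" and c: "c \<in> P" "\<not> S c"
  shows "wiener P (insert {a, c} (T - {{a, b}})) =
    wiener P T + card {v \<in> P. S v} * (\<Sum>v\<in>P. if S v then 0 else exchange_delta T a b c v)"
proof -
  let ?T' = "insert {a, c} (T - {{a, b}})"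
  have "(\<Sum>u\<in>P. \<Sum>v\<in>P. tree_dist ?T' u v) - (\<Sum>u\<in>P. \<Sum>v\<in>P. tree_dist T u v) =
      (\<Sum>u\<in>P. \<Sum>v\<in>P. tree_dist ?T' u v - tree_dist T u v)"
    by (simp add: sum_subtractf)
  also have "\<dots> = (\<Sum>u\<in>P. \<Sum>v\<in>P.
      (if S u \<and> \<not> S v then exchange_delta T a b c v else 0) +
      (if \<not> S u \<and> S v then exchange_delta T a b c u else 0))"
    using tree_dist_exchange_diff[OF cut c] by (intro sum.cong) auto
  also have "\<dots> = 2 * card {v \<in> P. S v} * (\<Sum>v\<in>P. if S v then 0 else exchange_delta T a b c v)"
    by (rule double_sum_across[OF \<open>finite P\<close>])
  finally show ?thesis by (simp add: wiener_def field_simps)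
qed

lemma wiener_minimal_exchange_nonneg:
  assumes "finite P" and minimal: "\<forall>T'. spanning_tree P T' \<longrightarrow> wiener P T \<le> wiener P T'"
    and cut: "tree_cut T S a b" and c: "c \<in> P" "\<not> S c"
  shows "0 \<le> (\<Sum>v\<in>P. if S v then 0 else exchange_delta T a b c v)"
proof -
  have a: "a \<in> P" "S a" using cut spanning_tree_edge by (auto simp: tree_cut_def)
  then have "spanning_tree P (insert {a, c} (T - {{a, b}}))"
    using spanning_tree_exchange[OF cut a(1) c(1) a(2) c(2)] by simp
  then have "0 \<le> card {v \<in> P. S v} * (\<Sum>v\<in>P. if S v then 0 else exchange_delta T a b c v)"
    using minimal wiener_exchange[OF \<open>finite P\<close> cut c] by fastforce
  moreover have "0 < card {v \<in> P. S v}"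
    using a \<open>finite P\<close> by (auto simp: card_gt_0_iff)
  ultimately show ?thesis by (simp add: zero_le_mult_iff)
qed

lemma wiener_minimal_edge_pair_ineq:
  assumes "finite P" and minimal: "\<forall>T'. spanning_tree P T' \<longrightarrow> wiener P T \<le> wiener P T'"
    and cut1: "tree_cut T S1 a b" and cut2: "tree_cut T S2 d c" and "\<not> S1 c" "\<not> S2 b"
  shows "dist a b + dist c d \<le> dist a c + dist b d"
proof (rule ccontr)
  assume shorter: "\<not> ?thesis"
  have abcd: "a \<in> P" "b \<in> P" "c \<in> P" "d \<in> P" "S1 a" "\<not> S1 b" "S2 d" "\<not> S2 c"
    using cut1 cut2 spanning_tree_edge by (auto simp: tree_cut_def)
  define h where "h v = (if S1 v then 0 else exchange_delta T a b c v) +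
    (if S2 v then 0 else exchange_delta T d c b v)" for v
  have nonneg: "0 \<le> (\<Sum>v\<in>P. h v)"
    using wiener_minimal_exchange_nonneg[OF assms(1,2) cut1 abcd(3) \<open>\<not> S1 c\<close>]
      wiener_minimal_exchange_nonneg[OF assms(1,2) cut2 abcd(2) \<open>\<not> S2 b\<close>]
    unfolding h_def sum.distrib by linarith
  have nonpos: "h v \<le> 0" if "v \<in> P" for v
    using exchange_delta_nonpos[OF cut2 that _ abcd(1,2) \<open>\<not> S2 b\<close>]
      exchange_delta_nonpos[OF cut1 that _ abcd(4,3) \<open>\<not> S1 c\<close>] shorter
    by (auto simp: h_def exchange_delta_def dist_commute)
  have "(\<Sum>v\<in>P. h v) = h b + (\<Sum>v\<in>P - {b}. h v)"
    using sum.remove[OF \<open>finite P\<close> abcd(2)] .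
  also have "\<dots> < 0"
    using abcd \<open>\<not> S2 b\<close> shorter sum_nonpos[of "P - {b}" h] nonpos
    by (auto simp: h_def exchange_delta_def dist_commute)
  finally show False using nonneg by simp
qed

end

lemma closed_segment_beyond:
  fixes p x y :: "'a::real_vector"
  assumes "x \<in> closed_segment p y" "x \<noteq> p"
  obtains c where "0 \<le> c" "y - x = c *\<^sub>R (x - p)"
proof -
  obtain u where u: "0 \<le> u" "u \<le> 1" "x = (1 - u) *\<^sub>R p + u *\<^sub>R y"
    using assms(1) by (auto simp: in_segment)
  then have "u \<noteq> 0" using assms(2) by auto
  have "x - p = u *\<^sub>R (y - p)" "y - x = (1 - u) *\<^sub>R (y - p)"
    using u(3) by (simp_all add: algebra_simps)
  then have "y - x = ((1 - u) / u) *\<^sub>R (x - p)"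
    using \<open>u \<noteq> 0\<close> by simp
  moreover have "0 \<le> (1 - u) / u" using u(1,2) by simp
  ultimately show thesis using that by blast
qed

lemma closed_segment_same_ray:
  fixes q r x w :: "'a::real_vector"
  assumes "q - x = \<alpha> *\<^sub>R w" "r - x = \<beta> *\<^sub>R w" "0 \<le> \<alpha>" "\<alpha> \<le> \<beta>"
  shows "q \<in> closed_segment x r"
proof (cases "\<beta> = 0")
  case True
  then show ?thesis using assms by simp
next
  case False
  have "q = (1 - \<alpha> / \<beta>) *\<^sub>R x + (\<alpha> / \<beta>) *\<^sub>R r"
    using assms False by (simp add: algebra_simps eq_diff_eq[symmetric])
  moreover have "0 \<le> \<alpha> / \<beta>" "\<alpha> / \<beta> \<le> 1" using assms False by auto
  ultimately show ?thesis unfolding in_segment by blast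
qed

lemma segments_cross_dist_less:
  fixes p q r s x :: "'a::euclidean_space"
  assumes meet: "closed_segment p q \<inter> closed_segment r s = {x}"
    and x: "x \<in> open_segment p q" "x \<in> open_segment r s"
  shows "dist p r < dist p x + dist x r"
proof (rule ccontr)
  have x_pq: "x \<in> closed_segment p q" "x \<noteq> p" "x \<noteq> q" and x_rs: "x \<in> closed_segment r s" "x \<noteq> r"
    using x by (auto simp: open_segment_def)
  assume "\<not> ?thesis"
  then have "dist p r = dist p x + dist x r" using dist_triangle[of p r x] by linarith
  then have "x \<in> closed_segment p r" using between between_mem_segment by blast
  obtain \<alpha> where \<alpha>: "0 \<le> \<alpha>" "q - x = \<alpha> *\<^sub>R (x - p)"
    using closed_segment_beyond[OF x_pq(1,2)] by blast
  obtain \<beta> where \<beta>: "0 \<le> \<beta>" "r - x = \<beta> *\<^sub>R (x - p)"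
    using closed_segment_beyond[OF \<open>x \<in> closed_segment p r\<close> x_pq(2)] by blast
  show False
  proof (cases "\<alpha> \<le> \<beta>")
    case True
    then have "q \<in> closed_segment x r" using closed_segment_same_ray \<alpha> \<beta> by blast
    also have "\<dots> \<subseteq> closed_segment r s" using x_rs(1) by (simp add: subset_closed_segment)
    finally show False using meet x_pq(3) by auto
  next
    case False
    then have "r \<in> closed_segment x q" using closed_segment_same_ray \<alpha> \<beta> by force
    also have "\<dots> \<subseteq> closed_segment p q" using x_pq(1) by (simp add: subset_closed_segment)
    finally show False using meet x_rs(2) by auto
  qed
qed

lemma segments_cross_exchange_shorter:
  fixes p q r s x :: "'a::euclidean_space"
  assumes "closed_segment p q \<inter> closed_segment r s = {x}"
    and "x \<in> open_segment p q" "x \<in> open_segment r s"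
  shows "dist p r + dist q s < dist p q + dist r s"
proof -
  have "dist p q = dist p x + dist x q" "dist r s = dist r x + dist x s"
    using assms by (auto simp: between[symmetric] between_mem_segment open_segment_def)
  moreover have "dist q s \<le> dist q x + dist x s" by (rule dist_triangle)
  ultimately show ?thesis
    using segments_cross_dist_less[OF assms] by (simp add: dist_commute)
qed

lemma segments_doubleton_eq:
  "{a, b} = {p, q} \<Longrightarrow> closed_segment a b = closed_segment p q \<and> open_segment a b = open_segment p q"
  by (auto simp: doubleton_eq_iff closed_segment_commute open_segment_commute)

lemma edges_cross_exchange_shorter:
  assumes "edges_cross {a, b} {c, d}"
  shows "dist a c + dist b d < dist a b + dist c d"
proof -
  obtain x where "closed_segment a b \<inter> closed_segment c d = {x}"
    "x \<in> open_segment a b" "x \<in> open_segment c d"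
    using assms segments_doubleton_eq unfolding edges_cross_def by metis
  then show ?thesis by (rule segments_cross_exchange_shorter)
qed

lemma not_edges_cross_self: "\<not> edges_cross e e"
proof
  assume "edges_cross e e"
  then obtain p q r s x where "e = {p, q}" "e = {r, s}"
    and meet: "closed_segment p q \<inter> closed_segment r s = {x}" and x: "x \<in> open_segment p q"
    unfolding edges_cross_def by (elim exE conjE) (rule that)
  then have pq: "{p, q} = {r, s}" by simp
  have "closed_segment p q = closed_segment r s" using segments_doubleton_eq[OF pq] by blast
  with meet have "p = x" by (metis Int_absorb ends_in_segment(1) singletonD)
  with x show False by (simp add: open_segment_def)
qed

theorem theorem1:
  fixes P :: "point set" and T :: "point set set"
  assumes "finite P"
    and "spanning_tree P T"
    and "\<forall>T'. spanning_tree P T' \<longrightarrow> wiener P T \<le> wiener P T'"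
  shows "planar_tree T"
  unfolding planar_tree_def
proof (intro ballI notI)
  interpret plane_spanning_tree P T using assms(2) by (rule plane_spanning_tree.intro)
  fix e f assume e: "e \<in> T" and f: "f \<in> T" and cross: "edges_cross e f"
  obtain r s where f_rs: "f = {r, s}"
    using cross unfolding edges_cross_def by (elim exE conjE) (rule that)
  obtain S1 a b where e_ab: "e = {a, b}" and cut1: "tree_cut T S1 a b" and "\<not> S1 r"
    using tree_cut_avoiding[OF e] by blast
  moreover have "e \<noteq> f" using cross not_edges_cross_self by blast
  ultimately have "\<not> S1 s" using cut1 f f_rs unfolding tree_cut_def by blast
  obtain S2 d c where f_dc: "f = {d, c}" and cut2: "tree_cut T S2 d c" and "\<not> S2 b"
    using tree_cut_avoiding[OF f] by blast
  have "\<not> S1 c" using f_rs f_dc \<open>\<not> S1 r\<close> \<open>\<not> S1 s\<close> by (auto simp: doubleton_eq_iff)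
  have "dist a c + dist b d < dist a b + dist c d"
    using cross e_ab f_dc edges_cross_exchange_shorter by (simp add: insert_commute)
  then show False
    using wiener_minimal_edge_pair_ineq[OF assms(1,3) cut1 cut2 \<open>\<not> S1 c\<close> \<open>\<not> S2 b\<close>] by linarith
qed

end
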